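(* Let $n,m\ge1$, $\mu>0$, $\nu>-1$, $D_{n,m}(\mu)=\{(z,w)\in\mathbb{C}^n\times\mathbb{C}^m:\|w\|^2<e^{-\mu\|z\|^2}\}$ and $\Phi(z,w)=\nu\mu\|z\|^2-\ln\left(e^{-\mu\|z\|^2}-\|w\|^2\right)$. Then for all $(z,w)\in D_{n,m}(\mu)$, $$\det\left(\frac{\partial^2\Phi}{\partial Z_i\partial\bar Z_j}\right)(z,w)=\frac{\mu^n\left[\nu+(1-\|\tilde w\|^2)^{-1}\right]^n}{(1-\|\tilde w\|^2)^{m+1}}e^{m\mu\|z\|^2},$$ where $(Z_1,\dots,Z_{n+m})=(z,w)$ and $\tilde w:=e^{\frac{\mu}{2}\|z\|^2}w$.
   Context: $\|\cdot\|$ is the standard Hermitian norm; the determinant is of the $(n+m)\times(n+m)$ complex Hessian matrix. *)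

theory Defs
  imports "HOL-Analysis.Analysis"
begin

definition dir_deriv :: "(complex^'k \<Rightarrow> real) \<Rightarrow> complex^'k \<Rightarrow> complex^'k \<Rightarrow> real" where
  "dir_deriv f v Z = deriv (\<lambda>t::real. f (Z + t *\<^sub>R v)) 0"

text \<open>Complex Hessian entry d^2 f / (dZ_i d conj Z_j) via Wirtinger operators
  d/dZ = (d/dx - i d/dy)/2, d/d conj Z = (d/dx + i d/dy)/2, where Z_k = x_k + i y_k.\<close>
definition wirtinger_hess :: "(complex^'k \<Rightarrow> real) \<Rightarrow> complex^'k \<Rightarrow> 'k \<Rightarrow> 'k \<Rightarrow> complex" where
  "wirtinger_hess f Z i j =
    (let ex = (\<lambda>k. axis k (1::complex)); ey = (\<lambda>k. axis k \<i>);
         d = (\<lambda>u v. dir_deriv (\<lambda>Y. dir_deriv f v Y) u Z)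
     in (1/4) * (complex_of_real (d (ex i) (ex j) + d (ey i) (ey j))
                 + \<i> * complex_of_real (d (ex i) (ey j) - d (ey i) (ex j))))"

definition complex_hessian :: "(complex^'k \<Rightarrow> real) \<Rightarrow> complex^'k \<Rightarrow> complex^'k^'k" where
  "complex_hessian f Z = (\<chi> i j. wirtinger_hess f Z i j)"

definition zpart :: "complex^('n::finite + 'm::finite) \<Rightarrow> complex^'n" where
  "zpart Z = (\<chi> i. Z $ Inl i)"
definition wpart :: "complex^('n::finite + 'm::finite) \<Rightarrow> complex^'m" where
  "wpart Z = (\<chi> j. Z $ Inr j)"
definition joinZ :: "complex^'n \<Rightarrow> complex^'m \<Rightarrow> complex^('n::finite + 'm::finite)" where
  "joinZ z w = (\<chi> k. case k of Inl i \<Rightarrow> z $ i | Inr j \<Rightarrow> w $ j)"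

definition domD :: "real \<Rightarrow> ((complex^'n) \<times> (complex^'m)) set" where
  "domD \<mu> = {(z,w). (norm w)^2 < exp (- \<mu> * (norm z)^2)}"

definition PhiF :: "real \<Rightarrow> real \<Rightarrow> complex^('n::finite + 'm::finite) \<Rightarrow> real" where
  "PhiF \<mu> \<nu> Z = \<nu> * \<mu> * (norm (zpart Z))^2
      - ln (exp (- \<mu> * (norm (zpart Z))^2) - (norm (wpart Z))^2)"

end

theory Submission
  imports Defs
begin

text \<open>\<Phi>(z, w) = F(|z|^2, |w|^2) with F(x, y) = \<nu> \<mu> x - ln (exp (- \<mu> x) - y). Hence its
  complex Hessian is the diagonal matrix with entries F_x on the z-block and F_y on the w-block,
  plus the rank-two matrix (conj Z_i Z_j c_ij), where c_ij is F_xx, F_xy or F_yy according to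
  the blocks of i and j. The matrix determinant lemma for rank-two perturbations reduces its
  determinant to a 2 \<times> 2 determinant; with E = exp (- \<mu> |z|^2) and s = E - |w|^2 this
  collapses to F_x^n s^-m E / s, and 1 - |w~|^2 = s / E.\<close>

definition outer_prod :: "('k::finite \<Rightarrow> 'a::semiring_1) \<Rightarrow> ('k \<Rightarrow> 'a) \<Rightarrow> 'a^'k^'k" where
  "outer_prod u v = (\<chi> i j. u i * v j)"

lemma outer_prod_mult_outer_prod:
  "outer_prod a b ** outer_prod c d = outer_prod a (\<lambda>j. (\<Sum>i\<in>UNIV. b i * c i) * d j)"
  by (simp add: outer_prod_def matrix_matrix_mult_def vec_eq_iff sum_distrib_left sum_distrib_right
      mult_ac)

lemma matrix_add_rdistrib: "(A + B) ** C = A ** C + B ** C"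
  by (simp add: matrix_matrix_mult_def vec_eq_iff distrib_right sum.distrib)

lemma det_identity_except_row:
  fixes A :: "'a::comm_ring_1^'k^'k"
  assumes id_rows: "\<And>i j. i \<noteq> k \<Longrightarrow> A$i$j = (if i = j then 1 else 0)"
  shows "det A = A$k$k"
proof -
  have "\<forall>p \<in> {p. p permutes (UNIV :: 'k set)} - {id}. of_int (sign p) * (\<Prod>i\<in>UNIV. A$i$p i) = 0"
  proof (intro ballI)
    fix p :: "'k \<Rightarrow> 'k" assume "p \<in> {p. p permutes UNIV} - {id}"
    then have p: "p permutes UNIV" "p \<noteq> id" by auto
    obtain i where "p i \<noteq> i" using \<open>p \<noteq> id\<close> by (metis eq_id_iff)
    then have "\<exists>j. j \<noteq> k \<and> p j \<noteq> j"
      using permutes_inj[OF p(1)] by (metis injD)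
    then obtain j where "j \<noteq> k" "A$j$p j = 0" using id_rows by auto
    then show "of_int (sign p) * (\<Prod>i\<in>UNIV. A$i$p i) = 0"
      by (metis UNIV_I finite prod_zero mult_zero_right)
  qed
  then have "det A = (\<Prod>i\<in>UNIV. A$i$i)"
    unfolding det_def
    by (subst sum.mono_neutral_cong_left[symmetric, of _ "{id}"]) auto
  also have "\<dots> = A$k$k"
    using id_rows by (subst prod.remove[of UNIV k]) (auto intro: prod.neutral)
  finally show ?thesis .
qed

lemma det_identity_except_column:
  fixes A :: "'a::comm_ring_1^'k^'k"
  assumes "\<And>i j. j \<noteq> k \<Longrightarrow> A$i$j = (if i = j then 1 else 0)"
  shows "det A = A$k$k"
proof -
  have "det A = det (transpose A)" by simp
  also have "\<dots> = transpose A $k$k"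
    by (rule det_identity_except_row) (auto simp: transpose_def assms)
  finally show ?thesis by (simp add: transpose_def)
qed

lemma det_identity_plus_outer_prod:
  fixes u v :: "'k::finite \<Rightarrow> 'a::field"
  shows "det (mat 1 + outer_prod u v) = 1 + (\<Sum>i\<in>UNIV. v i * u i)"
proof (cases "u = (\<lambda>_. 0)")
  case True
  then show ?thesis by (simp add: outer_prod_def vec_eq_iff flip: zero_vec_def)
next
  case False
  then obtain k where k: "u k \<noteq> 0" by blast
  \<comment> \<open>Conjugating by E, the identity with column k replaced by u, moves the
    rank-one part into row k.\<close>
  define E where "E = ((\<chi> i j. if j = k then u i else (if i = j then 1 else 0)) :: 'a^'k^'k)"
  define c where "c = (\<lambda>j. \<Sum>i\<in>UNIV. v i * E$i$j)"
  define R where "R = ((\<chi> i j. if i = k then c j else 0) :: 'a^'k^'k)"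
  have "(outer_prod u v ** E)$i$j = u i * c j" for i j
    by (simp add: outer_prod_def c_def matrix_matrix_mult_def sum_distrib_left mult.assoc)
  moreover have "(E ** R)$i$j = u i * c j" for i j
    by (simp add: R_def matrix_matrix_mult_def if_distrib[of "(*) _"] cong: if_cong)
      (simp add: E_def)
  ultimately have "(mat 1 + outer_prod u v) ** E = E ** (mat 1 + R)"
    by (simp add: matrix_add_rdistrib matrix_add_ldistrib vec_eq_iff)
  then have "det (mat 1 + outer_prod u v) * det E = det E * det (mat 1 + R)"
    by (simp flip: det_mul)
  moreover have "det E = u k"
    by (subst det_identity_except_column[where A=E and k=k]) (auto simp: E_def)
  moreover have "det (mat 1 + R) = 1 + c k"
    by (subst det_identity_except_row[where A="mat 1 + R" and k=k]) (auto simp: R_def mat_def)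
  moreover have "c k = (\<Sum>i\<in>UNIV. v i * u i)" by (simp add: c_def E_def)
  ultimately show ?thesis using k by simp
qed

lemma det_identity_plus_two_outer_prods:
  fixes u1 v1 u2 v2 :: "'k::finite \<Rightarrow> 'a::field"
  defines "d11 \<equiv> \<Sum>i\<in>UNIV. v1 i * u1 i" and "d12 \<equiv> \<Sum>i\<in>UNIV. v1 i * u2 i"
    and "d21 \<equiv> \<Sum>i\<in>UNIV. v2 i * u1 i" and "d22 \<equiv> \<Sum>i\<in>UNIV. v2 i * u2 i"
  assumes nz: "1 + d11 \<noteq> 0"
  shows "det (mat 1 + outer_prod u1 v1 + outer_prod u2 v2) = (1 + d11) * (1 + d22) - d12 * d21"
proof -
  \<comment> \<open>Factor as (I + u1 v1^T)(I + u' v2^T), with u' chosen so that the cross term restores u2.\<close>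
  define c where "c = d12 / (1 + d11)"
  define u' where "u' = (\<lambda>i. u2 i - c * u1 i)"
  have "(\<Sum>i\<in>UNIV. v1 i * u' i) = d12 - c * d11"
    by (simp add: u'_def d11_def d12_def right_diff_distrib sum_subtractf sum_distrib_left
        mult.left_commute)
  also have "\<dots> = c" using nz by (simp add: c_def field_simps)
  finally have v1_u': "(\<Sum>i\<in>UNIV. v1 i * u' i) = c" .
  have v2_u': "(\<Sum>i\<in>UNIV. v2 i * u' i) = d22 - c * d21"
    by (simp add: u'_def d21_def d22_def right_diff_distrib sum_subtractf sum_distrib_left
        mult.left_commute)
  have "(mat 1 + outer_prod u1 v1) ** (mat 1 + outer_prod u' v2)
      = mat 1 + outer_prod u1 v1 + (outer_prod u' v2 + outer_prod u1 (\<lambda>j. c * v2 j))"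
    by (simp add: matrix_add_ldistrib matrix_add_rdistrib outer_prod_mult_outer_prod v1_u' add_ac)
  also have "outer_prod u' v2 + outer_prod u1 (\<lambda>j. c * v2 j) = outer_prod u2 v2"
    by (simp add: outer_prod_def u'_def vec_eq_iff algebra_simps)
  finally have "det (mat 1 + outer_prod u1 v1 + outer_prod u2 v2)
      = det (mat 1 + outer_prod u1 v1) * det (mat 1 + outer_prod u' v2)"
    by (metis det_mul)
  also have "\<dots> = (1 + d11) * (1 + (d22 - c * d21))"
    by (simp add: det_identity_plus_outer_prod v2_u' d11_def)
  also have "\<dots> = (1 + d11) * (1 + d22) - d12 * d21"
    using nz by (simp add: c_def field_simps)
  finally show ?thesis .
qed

lemma det_diagonal_plus_two_outer_prods:
  fixes d u1 v1 u2 v2 :: "'k::finite \<Rightarrow> 'a::field"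
  defines "d11 \<equiv> \<Sum>i\<in>UNIV. v1 i * u1 i / d i" and "d12 \<equiv> \<Sum>i\<in>UNIV. v1 i * u2 i / d i"
    and "d21 \<equiv> \<Sum>i\<in>UNIV. v2 i * u1 i / d i" and "d22 \<equiv> \<Sum>i\<in>UNIV. v2 i * u2 i / d i"
  assumes d_nz: "\<And>i. d i \<noteq> 0" and nz: "1 + d11 \<noteq> 0"
  shows "det ((\<chi> i j. if i = j then d i else 0) + outer_prod u1 v1 + outer_prod u2 v2)
    = (\<Prod>i\<in>UNIV. d i) * ((1 + d11) * (1 + d22) - d12 * d21)"
proof -
  define D where "D = ((\<chi> i j. if i = j then d i else 0) :: 'a^'k^'k)"
  have "D ** outer_prod a v = outer_prod (\<lambda>i. d i * a i) v" for a v
    by (simp add: D_def outer_prod_def matrix_matrix_mult_def vec_eq_iff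
        if_distrib[of "\<lambda>x. x * _"] mult.assoc cong: if_cong)
  then have D_outer_prod: "D ** outer_prod (\<lambda>i. u i / d i) v = outer_prod u v" for u v
    using d_nz by simp
  have "D + outer_prod u1 v1 + outer_prod u2 v2
      = D ** (mat 1 + outer_prod (\<lambda>i. u1 i / d i) v1 + outer_prod (\<lambda>i. u2 i / d i) v2)"
    by (simp add: matrix_add_ldistrib D_outer_prod)
  moreover have "det D = (\<Prod>i\<in>UNIV. d i)" by (simp add: D_def det_diagonal)
  ultimately show ?thesis
    using nz by (simp add: D_def det_mul det_identity_plus_two_outer_prods d11_def d12_def
        d21_def d22_def mult_ac)
qed

lemma sum_UNIV_Plus:
  "(\<Sum>k\<in>UNIV. f k) = (\<Sum>i\<in>UNIV. f (Inl i)) + (\<Sum>j\<in>UNIV. f (Inr j))"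
  for f :: "'a::finite + 'b::finite \<Rightarrow> 'c::comm_monoid_add"
  by (simp flip: UNIV_Plus_UNIV add: sum.Plus comp_def)

lemma prod_UNIV_Plus:
  "(\<Prod>k\<in>UNIV. f k) = (\<Prod>i\<in>UNIV. f (Inl i)) * (\<Prod>j\<in>UNIV. f (Inr j))"
  for f :: "'a::finite + 'b::finite \<Rightarrow> 'c::comm_monoid_mult"
  by (simp flip: UNIV_Plus_UNIV add: prod.Plus comp_def)

lemma of_real_power2_norm_vec: "of_real ((norm x)^2) = (\<Sum>i\<in>UNIV. cnj (x$i) * x$i)"
  for x :: "complex^'k::finite"
  unfolding power2_norm_eq_inner inner_vec_def of_real_sum
  by (simp add: inner_complex_def mult.commute[of "cnj _"] complex_mult_cnj power2_eq_square)

lemma sum_cnj_mult_weighted: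
  fixes Z :: "complex^('n::finite + 'm::finite)"
  shows "(\<Sum>k\<in>UNIV. cnj (Z$k) * Z$k * of_real (if isl k then a else b))
    = of_real (a * (norm (zpart Z))^2 + b * (norm (wpart Z))^2)"
  unfolding of_real_add of_real_mult of_real_power2_norm_vec
  by (simp add: sum_UNIV_Plus zpart_def wpart_def sum_distrib_left
      sum_distrib_right mult_ac)

text \<open>The shape of the complex Hessian of any F(|z|^2, |w|^2): p, q are the first and
  a, b, c the second partial derivatives of F.\<close>

lemma det_biradial_matrix:
  fixes Z :: "complex^('n::finite + 'm::finite)" and p q a b c :: real
  assumes "p \<noteq> 0" "q \<noteq> 0" and nz: "1 + a * (norm (zpart Z))^2 / p \<noteq> 0"
  shows "det ((\<chi> i j. if i = j then of_real (if isl i then p else q) else 0)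
      + outer_prod (\<lambda>i. if isl i then cnj (Z$i) else 0) (\<lambda>j. Z$j * of_real (if isl j then a else b))
      + outer_prod (\<lambda>i. if isl i then 0 else cnj (Z$i)) (\<lambda>j. Z$j * of_real (if isl j then b else c)))
    = of_real (p ^ CARD('n) * q ^ CARD('m)
        * ((1 + a * (norm (zpart Z))^2 / p) * (1 + c * (norm (wpart Z))^2 / q)
           - b^2 * (norm (zpart Z))^2 * (norm (wpart Z))^2 / (p * q)))"
proof -
  define d where "d = (\<lambda>i::'n + 'm. complex_of_real (if isl i then p else q))"
  define u1 where "u1 = (\<lambda>i::'n + 'm. if isl i then cnj (Z$i) else 0)"
  define u2 where "u2 = (\<lambda>i::'n + 'm. if isl i then 0 else cnj (Z$i))"
  define v1 where "v1 = (\<lambda>j. Z$j * of_real (if isl j then a else b))"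
  define v2 where "v2 = (\<lambda>j. Z$j * of_real (if isl j then b else c))"
  have sums: "(\<Sum>i\<in>UNIV. v i * u i / d i)
      = of_real (x * (norm (zpart Z))^2 + y * (norm (wpart Z))^2)"
    if "\<And>i. v i * u i / d i = cnj (Z$i) * Z$i * of_real (if isl i then x else y)" for u v x y
    by (simp add: that sum_cnj_mult_weighted)
  have d11: "(\<Sum>i\<in>UNIV. v1 i * u1 i / d i) = of_real (a * (norm (zpart Z))^2 / p)"
    by (subst sums[where x="a / p" and y=0]) (auto simp: v1_def u1_def d_def)
  have d12: "(\<Sum>i\<in>UNIV. v1 i * u2 i / d i) = of_real (b * (norm (wpart Z))^2 / q)"
    by (subst sums[where x=0 and y="b / q"]) (auto simp: v1_def u2_def d_def)
  have d21: "(\<Sum>i\<in>UNIV. v2 i * u1 i / d i) = of_real (b * (norm (zpart Z))^2 / p)"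
    by (subst sums[where x="b / p" and y=0]) (auto simp: v2_def u1_def d_def)
  have d22: "(\<Sum>i\<in>UNIV. v2 i * u2 i / d i) = of_real (c * (norm (wpart Z))^2 / q)"
    by (subst sums[where x=0 and y="c / q"]) (auto simp: v2_def u2_def d_def)
  have "d i \<noteq> 0" for i using assms by (simp add: d_def)
  moreover have "1 + (\<Sum>i\<in>UNIV. v1 i * u1 i / d i) \<noteq> 0"
    unfolding d11 using nz by (metis of_real_1 of_real_add of_real_eq_0_iff)
  ultimately have "det ((\<chi> i j. if i = j then d i else 0) + outer_prod u1 v1 + outer_prod u2 v2)
      = (\<Prod>i\<in>UNIV. d i) *
      ((1 + (\<Sum>i\<in>UNIV. v1 i * u1 i / d i)) * (1 + (\<Sum>i\<in>UNIV. v2 i * u2 i / d i))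
       - (\<Sum>i\<in>UNIV. v1 i * u2 i / d i) * (\<Sum>i\<in>UNIV. v2 i * u1 i / d i))"
    by (rule det_diagonal_plus_two_outer_prods)
  also have "(\<Prod>i\<in>UNIV. d i) = of_real (p ^ CARD('n) * q ^ CARD('m))"
    by (simp add: d_def prod_UNIV_Plus)
  also have "(1 + (\<Sum>i\<in>UNIV. v1 i * u1 i / d i)) * (1 + (\<Sum>i\<in>UNIV. v2 i * u2 i / d i))
       - (\<Sum>i\<in>UNIV. v1 i * u2 i / d i) * (\<Sum>i\<in>UNIV. v2 i * u1 i / d i)
      = of_real ((1 + a * (norm (zpart Z))^2 / p) * (1 + c * (norm (wpart Z))^2 / q)
           - b^2 * (norm (zpart Z))^2 * (norm (wpart Z))^2 / (p * q))"
    unfolding d11 d12 d21 d22 by (simp add: power2_eq_square mult_ac)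
  finally show ?thesis
    unfolding of_real_mult d_def u1_def u2_def v1_def v2_def .
qed

lemma power2_norm_add_scaleR:
  fixes x v :: "'a::real_inner"
  shows "(norm (x + t *\<^sub>R v))^2 = (norm x)^2 + 2 * t * (x \<bullet> v) + t^2 * (norm v)^2"
  unfolding power2_norm_eq_inner
  by (simp add: inner_add_left inner_add_right inner_commute algebra_simps power2_eq_square)

lemma zpart_add_scaleR: "zpart (Y + t *\<^sub>R V) = zpart Y + t *\<^sub>R zpart V"
  by (simp add: zpart_def vec_eq_iff)

lemma wpart_add_scaleR: "wpart (Y + t *\<^sub>R V) = wpart Y + t *\<^sub>R wpart V"
  by (simp add: wpart_def vec_eq_iff)

lemma dir_deriv_PhiF:
  fixes Y V :: "complex^('n::finite + 'm::finite)"
  assumes dom: "(norm (wpart Y))^2 < exp (- \<mu> * (norm (zpart Y))^2)"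
  defines "E \<equiv> exp (- \<mu> * (norm (zpart Y))^2)"
    and "s \<equiv> exp (- \<mu> * (norm (zpart Y))^2) - (norm (wpart Y))^2"
  shows "dir_deriv (PhiF \<mu> \<nu>) V Y =
    (\<nu> * \<mu> + \<mu> * E / s) * (2 * (zpart Y \<bullet> zpart V)) + 2 * (wpart Y \<bullet> wpart V) / s"
  (is "_ = ?D")
proof -
  have "((\<lambda>t. PhiF \<mu> \<nu> (Y + t *\<^sub>R V)) has_real_derivative ?D) (at 0)"
    unfolding PhiF_def zpart_add_scaleR wpart_add_scaleR power2_norm_add_scaleR
    apply (rule derivative_eq_intros refl | (use dom in simp; fail))+
    apply (simp add: E_def s_def add_divide_distrib diff_divide_distrib algebra_simps)
    done
  then show ?thesis unfolding dir_deriv_def by (rule DERIV_imp_deriv)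
qed

lemma dir_deriv2_PhiF:
  fixes Z U V :: "complex^('n::finite + 'm::finite)"
  assumes dom: "(norm (wpart Z))^2 < exp (- \<mu> * (norm (zpart Z))^2)"
  defines "E \<equiv> exp (- \<mu> * (norm (zpart Z))^2)"
    and "s \<equiv> exp (- \<mu> * (norm (zpart Z))^2) - (norm (wpart Z))^2"
  shows "dir_deriv (\<lambda>Y. dir_deriv (PhiF \<mu> \<nu>) V Y) U Z =
    (\<mu>^2 * E * (norm (wpart Z))^2 / s^2 * (2 * (zpart Z \<bullet> zpart U))
        + \<mu> * E / s^2 * (2 * (wpart Z \<bullet> wpart U))) * (2 * (zpart Z \<bullet> zpart V))
    + (\<nu> * \<mu> + \<mu> * E / s) * (2 * (zpart U \<bullet> zpart V))
    + (\<mu> * E / s^2 * (2 * (zpart Z \<bullet> zpart U)) + 1 / s^2 * (2 * (wpart Z \<bullet> wpart U)))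
      * (2 * (wpart Z \<bullet> wpart V))
    + 2 * (wpart U \<bullet> wpart V) / s" (is "_ = ?D")
proof -
  have w2: "(norm (wpart Z))^2 = E - s" by (simp add: E_def s_def)
  have s_pos: "s > 0" using dom by (simp add: s_def)
  have exp_E: "exp (- (\<mu> * (norm (zpart Z))^2)) = E" by (simp add: E_def)
  define a where "a = (\<lambda>t::real.
    (norm (zpart Z))^2 + 2 * t * (zpart Z \<bullet> zpart U) + t^2 * (norm (zpart U))^2)"
  define b where "b = (\<lambda>t::real.
    (norm (wpart Z))^2 + 2 * t * (wpart Z \<bullet> wpart U) + t^2 * (norm (wpart U))^2)"
  define g where "g = (\<lambda>t. (\<nu> * \<mu> + \<mu> * exp (- \<mu> * a t) / (exp (- \<mu> * a t) - b t))
      * (2 * (zpart Z \<bullet> zpart V + t * (zpart U \<bullet> zpart V)))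
    + 2 * (wpart Z \<bullet> wpart V + t * (wpart U \<bullet> wpart V)) / (exp (- \<mu> * a t) - b t))"
  \<comment> \<open>The closed form of the first derivative holds only inside the domain, hence near t = 0.\<close>
  have "open {t. b t < exp (- \<mu> * a t)}"
    unfolding a_def b_def by (intro open_Collect_less continuous_intros)
  moreover have "0 \<in> {t. b t < exp (- \<mu> * a t)}" using dom by (simp add: a_def b_def)
  ultimately have "eventually (\<lambda>t. b t < exp (- \<mu> * a t)) (nhds 0)"
    using eventually_nhds_in_open by fastforce
  then have near: "eventually (\<lambda>t. dir_deriv (PhiF \<mu> \<nu>) V (Z + t *\<^sub>R U) = g t) (nhds 0)"
    by eventually_elim
      (simp add: dir_deriv_PhiF zpart_add_scaleR wpart_add_scaleR power2_norm_add_scaleR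
         inner_add_left a_def b_def g_def)
  have "(g has_real_derivative ?D) (at 0)"
    unfolding g_def a_def b_def
    apply (rule derivative_eq_intros refl | (use dom in simp; fail))+
    apply (simp add: exp_E)
    apply (simp add: w2)
    using s_pos by (simp add: field_simps power2_eq_square)
  then have "((\<lambda>t. dir_deriv (PhiF \<mu> \<nu>) V (Z + t *\<^sub>R U)) has_real_derivative ?D) (at 0)"
    by (subst DERIV_cong_ev[OF refl near refl])
  then show ?thesis unfolding dir_deriv_def by (rule DERIV_imp_deriv)
qed

lemma inner_zpart_axis: "zpart Y \<bullet> zpart (axis k c) = (if isl k then Y$k \<bullet> c else 0)"
  by (cases k) (simp_all add: zpart_def inner_vec_def axis_def if_distrib[of "inner _"] cong: if_cong)

lemma inner_wpart_axis: "wpart Y \<bullet> wpart (axis k c) = (if isl k then 0 else Y$k \<bullet> c)"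
  by (cases k) (simp_all add: wpart_def inner_vec_def axis_def if_distrib[of "inner _"] cong: if_cong)

lemma wirtinger_hess_PhiF:
  fixes Z :: "complex^('n::finite + 'm::finite)"
  assumes dom: "(norm (wpart Z))^2 < exp (- \<mu> * (norm (zpart Z))^2)"
  defines "E \<equiv> exp (- \<mu> * (norm (zpart Z))^2)"
    and "s \<equiv> exp (- \<mu> * (norm (zpart Z))^2) - (norm (wpart Z))^2"
  shows "wirtinger_hess (PhiF \<mu> \<nu>) Z i j =
    (if i = j then of_real (if isl i then \<nu> * \<mu> + \<mu> * E / s else 1 / s) else 0)
    + cnj (Z$i) * Z$j * of_real
       (if isl i \<and> isl j then \<mu>^2 * E * (norm (wpart Z))^2 / s^2
        else if \<not> isl i \<and> \<not> isl j then 1 / s^2 else \<mu> * E / s^2)"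
  unfolding wirtinger_hess_def Let_def dir_deriv2_PhiF[OF dom, folded E_def s_def]
    inner_zpart_axis inner_wpart_axis
  by (cases "isl i"; cases "isl j")
    (auto simp: axis_def inner_complex_def complex_eq_iff
      algebra_simps add_divide_distrib diff_divide_distrib)

lemma complex_hessian_PhiF:
  fixes Z :: "complex^('n::finite + 'm::finite)"
  assumes dom: "(norm (wpart Z))^2 < exp (- \<mu> * (norm (zpart Z))^2)"
  defines "E \<equiv> exp (- \<mu> * (norm (zpart Z))^2)"
    and "s \<equiv> exp (- \<mu> * (norm (zpart Z))^2) - (norm (wpart Z))^2"
  shows "complex_hessian (PhiF \<mu> \<nu>) Z =
    (\<chi> i j. if i = j then of_real (if isl i then \<nu> * \<mu> + \<mu> * E / s else 1 / s) else 0)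
    + outer_prod (\<lambda>i. if isl i then cnj (Z$i) else 0)
        (\<lambda>j. Z$j * of_real (if isl j then \<mu>^2 * E * (norm (wpart Z))^2 / s^2 else \<mu> * E / s^2))
    + outer_prod (\<lambda>i. if isl i then 0 else cnj (Z$i))
        (\<lambda>j. Z$j * of_real (if isl j then \<mu> * E / s^2 else 1 / s^2))"
  unfolding complex_hessian_def wirtinger_hess_PhiF[OF dom, folded E_def s_def]
  by (simp add: outer_prod_def vec_eq_iff)

lemma det_complex_hessian_PhiF:
  fixes Z :: "complex^('n::finite + 'm::finite)"
  assumes "\<mu> > 0" "\<nu> > -1" and dom: "(norm (wpart Z))^2 < exp (- \<mu> * (norm (zpart Z))^2)"
  defines "E \<equiv> exp (- \<mu> * (norm (zpart Z))^2)"
    and "s \<equiv> exp (- \<mu> * (norm (zpart Z))^2) - (norm (wpart Z))^2"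
  shows "det (complex_hessian (PhiF \<mu> \<nu>) Z)
    = of_real ((\<nu> * \<mu> + \<mu> * E / s) ^ CARD('n) * (1 / s) ^ CARD('m) * (E / s))"
proof -
  define p where "p = \<nu> * \<mu> + \<mu> * E / s"
  have s_pos: "s > 0" using dom by (simp add: s_def)
  have w2: "(norm (wpart Z))^2 = E - s" by (simp add: E_def s_def)
  have "p = \<mu> * (\<nu> + E / s)" by (simp add: p_def algebra_simps)
  moreover have "E / s \<ge> 1" using s_pos w2 zero_le_power2[of "norm (wpart Z)"] by simp
  ultimately have p_pos: "p > 0" using assms(1,2) by (simp add: add_pos_nonneg)
  have "0 \<le> \<mu>^2 * E * (norm (wpart Z))^2 / s^2 * (norm (zpart Z))^2 / p"
    using p_pos by (simp add: E_def)
  then have "det (complex_hessian (PhiF \<mu> \<nu>) Z) = of_real (p ^ CARD('n) * (1 / s) ^ CARD('m)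
      * ((1 + \<mu>^2 * E * (norm (wpart Z))^2 / s^2 * (norm (zpart Z))^2 / p)
           * (1 + 1 / s^2 * (norm (wpart Z))^2 / (1 / s))
         - (\<mu> * E / s^2)^2 * (norm (zpart Z))^2 * (norm (wpart Z))^2 / (p * (1 / s))))"
    unfolding complex_hessian_PhiF[OF dom, folded E_def s_def]
    using p_pos s_pos by (subst det_biradial_matrix) (auto simp: p_def)
  also have "(1 + \<mu>^2 * E * (norm (wpart Z))^2 / s^2 * (norm (zpart Z))^2 / p)
           * (1 + 1 / s^2 * (norm (wpart Z))^2 / (1 / s))
         - (\<mu> * E / s^2)^2 * (norm (zpart Z))^2 * (norm (wpart Z))^2 / (p * (1 / s)) = E / s"
    using p_pos s_pos unfolding w2 by (simp add: field_simps power2_eq_square)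
  finally show ?thesis by (simp add: p_def)
qed

lemma zpart_joinZ [simp]: "zpart (joinZ z w) = z"
  by (simp add: zpart_def joinZ_def vec_eq_iff)

lemma wpart_joinZ [simp]: "wpart (joinZ z w) = w"
  by (simp add: wpart_def joinZ_def vec_eq_iff)

theorem lemma2p3:
  fixes \<mu> \<nu> :: real and z :: "complex^'n::finite" and w :: "complex^'m::finite"
  assumes "\<mu> > 0" and "\<nu> > -1" and "(z, w) \<in> domD \<mu>"
  shows "det (complex_hessian (PhiF \<mu> \<nu> :: complex^('n + 'm) \<Rightarrow> real) (joinZ z w)) =
    complex_of_real
      (let wt = exp (\<mu> / 2 * (norm z)^2) *\<^sub>R w in
       \<mu> ^ CARD('n) * (\<nu> + 1 / (1 - (norm wt)^2)) ^ CARD('n)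
         / (1 - (norm wt)^2) ^ (CARD('m) + 1) * exp (real CARD('m) * \<mu> * (norm z)^2))"
proof -
  define E where "E = exp (- \<mu> * (norm z)^2)"
  define s where "s = E - (norm w)^2"
  have dom: "(norm (wpart (joinZ z w)))^2 < exp (- \<mu> * (norm (zpart (joinZ z w)))^2)"
    using assms(3) by (simp add: domD_def)
  have E_pos: "E > 0" and s_pos: "s > 0" using dom by (simp_all add: E_def s_def)
  have exp_E: "exp (\<mu> * (norm z)^2) = 1 / E" by (simp add: E_def exp_minus field_simps)
  have "(norm (exp (\<mu> / 2 * (norm z)^2) *\<^sub>R w))^2 = exp (\<mu> * (norm z)^2) * (norm w)^2"
    by (simp add: power_mult_distrib power2_eq_square flip: exp_add)
  then have one_minus_wt: "1 - (norm (exp (\<mu> / 2 * (norm z)^2) *\<^sub>R w))^2 = s / E"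
    using E_pos by (simp add: exp_E s_def field_simps)
  have exp_m: "exp (real CARD('m) * \<mu> * (norm z)^2) = (1 / E) ^ CARD('m)"
    unfolding mult.assoc exp_of_nat_mult exp_E ..
  have "\<mu> ^ CARD('n) * (\<nu> + 1 / (s / E)) ^ CARD('n) = (\<nu> * \<mu> + \<mu> * E / s) ^ CARD('n)"
    by (simp add: algebra_simps flip: power_mult_distrib)
  moreover have "(1 / E) ^ CARD('m) / (s / E) ^ (CARD('m) + 1) = (1 / s) ^ CARD('m) * (E / s)"
    using E_pos s_pos by (simp add: power_divide field_simps)
  moreover have "(let wt = exp (\<mu> / 2 * (norm z)^2) *\<^sub>R w in
       \<mu> ^ CARD('n) * (\<nu> + 1 / (1 - (norm wt)^2)) ^ CARD('n)
         / (1 - (norm wt)^2) ^ (CARD('m) + 1) * exp (real CARD('m) * \<mu> * (norm z)^2))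
      = \<mu> ^ CARD('n) * (\<nu> + 1 / (s / E)) ^ CARD('n)
          * ((1 / E) ^ CARD('m) / (s / E) ^ (CARD('m) + 1))"
    unfolding Let_def one_minus_wt exp_m by (simp only: times_divide_eq_left times_divide_eq_right)
  ultimately show ?thesis
    using det_complex_hessian_PhiF[OF assms(1,2) dom] by (simp add: E_def s_def mult.assoc)
qed

end
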